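(* Let $n\ge 2$ and $1\le k\le n-1$ be integers, $\lambda>0$, $s\ge 0$, and $t\in\{1,\dots,n\}$. Let $X_1,\dots,X_n$ be independent random variables each with the shifted-exponential distribution $\mathrm{Shifted\text{-}Exp}(\lambda,s)$, i.e. with CDF $F(y)=1-e^{-\lambda(y-s)}$ for $y\ge s$ and $F(y)=0$ for $y<s$. Let $$Y_{t,2}=\min\Big(X_t,\ \max\big(\mathrm{mink}(\{X_i\}_{i\neq t})\big)\Big),$$ where $\max(\mathrm{mink}(\{X_i\}_{i\neq t}))$ denotes the $k$-th smallest of the $n-1$ values $X_i$, $i\ne t$. Then $$E[Y_{t,2}]=s+\frac{k}{\lambda n}.$$
   Context: In an $(n,k,m)$ systematic MDS array code stored on $n$ nodes (any $k$ nodes recover all data), $X_i$ is the access latency of node $i$; $Y_{t,2}$ is the data access latency of the proposed accelerated access algorithms (AAKL/AAUL) for the data of node $t$: the minimum of directly reading node $t$ and reading the fastest $k$ nodes other than $t$ and decoding. *)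

theory Defs
  imports "HOL-Probability.Probability"
begin

definition shifted_exp_cdf :: "real \<Rightarrow> real \<Rightarrow> real \<Rightarrow> real" where
  "shifted_exp_cdf l s y = (if y < s then 0 else 1 - exp (- l * (y - s)))"

definition kth_smallest :: "nat \<Rightarrow> real list \<Rightarrow> real" where
  "kth_smallest k xs = sort xs ! (k - 1)"

definition Y_t2 :: "nat \<Rightarrow> nat \<Rightarrow> nat \<Rightarrow> (nat \<Rightarrow> 'a \<Rightarrow> real) \<Rightarrow> 'a \<Rightarrow> real" where
  "Y_t2 n k t X \<omega> =
     min (X t \<omega>) (kth_smallest k (map (\<lambda>i. X i \<omega>) (filter (\<lambda>i. i \<noteq> t) [1..<n+1])))"

end

theory Submission
  imports Defs "HOL-Real_Asymp.Real_Asymp"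
begin

(* Y_{t,2} > y holds iff X_t > y and fewer than k of the other n - 1 variables are at most y,
   so by independence P(Y_{t,2} > y) = T(F y) with
   T(p) = Y_t2_tail n k p = \<Sum>j<k. (n-1 choose j) p^j (1-p)^(n-j).  Hence E[Y_{t,2}] = \<integral>_0^\<infinity> T(F y) dy
   = s + \<integral>_s^\<infinity> T(1 - e^(-\<lambda>(y-s))) dy.  Since F' = \<lambda>(1 - F) on [s, \<infinity>), the j-th summand of
   T(F y) is -1/(\<lambda>n) times the derivative of the binomial CDF P(Bin(n, F y) \<le> j), which
   falls from 1 at y = s to 0 at infinity; so each of the k summands contributes 1/(\<lambda>n). *)

lemma sorted_less_nth_iff:
  fixes ys :: "'a::linorder list"
  assumes "sorted ys" and "i < length ys"
  shows "y < ys ! i \<longleftrightarrow> length (filter (\<lambda>x. x \<le> y) ys) \<le> i"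
proof -
  let ?J = "{j. j < length ys \<and> ys ! j \<le> y}"
  have count: "length (filter (\<lambda>x. x \<le> y) ys) = card ?J"
    by (rule length_filter_conv_card)
  show ?thesis
  proof
    assume "y < ys ! i"
    have "j < i" if "j \<in> ?J" for j
      using that \<open>y < ys ! i\<close> sorted_nth_mono[OF assms(1), of i j] by (cases "i \<le> j") auto
    then have "?J \<subseteq> {..<i}"
      by blast
    then show "length (filter (\<lambda>x. x \<le> y) ys) \<le> i"
      unfolding count by (metis card_lessThan card_mono finite_lessThan)
  next
    assume "length (filter (\<lambda>x. x \<le> y) ys) \<le> i"
    moreover have "ys ! i \<le> y \<Longrightarrow> {..i} \<subseteq> ?J"
      using sorted_nth_mono[OF assms(1), of _ i] assms(2) by force
    then have "ys ! i \<le> y \<Longrightarrow> Suc i \<le> card ?J"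
      using card_mono[of ?J "{..i}"] by simp
    ultimately show "y < ys ! i"
      unfolding count by (meson Suc_n_not_le_n le_trans not_less)
  qed
qed

lemma less_kth_smallest_iff:
  assumes "1 \<le> k" and "k \<le> length xs"
  shows "y < kth_smallest k xs \<longleftrightarrow> length (filter (\<lambda>x. x \<le> y) xs) < k"
proof -
  have "length (filter (\<lambda>x. x \<le> y) (sort xs)) = length (filter (\<lambda>x. x \<le> y) xs)"
    by (simp add: filter_sort)
  then show ?thesis
    using sorted_less_nth_iff[of "sort xs" "k - 1" y] assms
    unfolding kth_smallest_def by auto
qed

lemma less_Y_t2_iff:
  assumes "t \<in> {1..n}" and "1 \<le> k" and "k \<le> n - 1"
  shows "y < Y_t2 n k t X \<omega> \<longleftrightarrow> y < X t \<omega> \<and> card {i \<in> {1..n} - {t}. X i \<omega> \<le> y} < k"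
proof -
  define others where "others = filter (\<lambda>i. i \<noteq> t) [1..<n+1]"
  have "distinct others" and set_others: "set others = {1..n} - {t}"
    unfolding others_def by auto
  then have "length others = n - 1"
    using assms(1) by (metis card_Diff_singleton card_atLeastAtMost diff_Suc_1 distinct_card)
  moreover have "length (filter (\<lambda>x. x \<le> y) (map (\<lambda>i. X i \<omega>) others))
      = card {i \<in> {1..n} - {t}. X i \<omega> \<le> y}"
    using \<open>distinct others\<close> set_others by (simp add: filter_map distinct_length_filter Int_def conj_commute)
  ultimately show ?thesis
    using less_kth_smallest_iff[of k "map (\<lambda>i. X i \<omega>) others" y] assms
    unfolding Y_t2_def others_def[symmetric] by auto
qed

lemma sum_subsets_card_less:
  fixes g :: "nat \<Rightarrow> 'b::comm_semiring_1"
  assumes "finite S"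
  shows "(\<Sum>B | B \<subseteq> S \<and> card B < k. g (card B)) = (\<Sum>j<k. of_nat (card S choose j) * g j)"
proof -
  have split: "{B. B \<subseteq> S \<and> card B < k} = (\<Union>j<k. {B. B \<subseteq> S \<and> card B = j})"
    by auto
  have finite: "finite {B. B \<subseteq> S \<and> card B = j}" for j
    using assms by (auto intro: rev_finite_subset[of "Pow S"])
  have "(\<Sum>B | B \<subseteq> S \<and> card B < k. g (card B))
      = (\<Sum>j<k. \<Sum>B | B \<subseteq> S \<and> card B = j. g (card B))"
    unfolding split by (rule sum.UNION_disjoint) (auto simp: finite)
  also have "\<dots> = (\<Sum>j<k. of_nat (card S choose j) * g j)"
    using n_subsets[OF assms] by (intro sum.cong) (auto simp: mult_of_nat_commute)
  finally show ?thesis .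
qed

lemma prod_if_mem:
  fixes a b :: "'b::comm_monoid_mult"
  assumes "finite I" and "B \<subseteq> I"
  shows "(\<Prod>i\<in>I. if i \<in> B then a else b) = a ^ card B * b ^ (card I - card B)"
proof -
  have "(\<Prod>i\<in>I. if i \<in> B then a else b) = (\<Prod>i\<in>B. a) * (\<Prod>i\<in>I - B. b)"
    using assms by (simp add: prod.If_cases Int_absorb1 Diff_eq)
  then show ?thesis
    using assms by (simp add: card_Diff_subset finite_subset)
qed

lemma (in prob_space) prob_indep_le_iff_mem:
  fixes X :: "'i \<Rightarrow> 'a \<Rightarrow> real"
  assumes indep: "indep_vars (\<lambda>_. borel) X I" and "finite I" and "B \<subseteq> I"
    and cdf: "\<And>i. i \<in> I \<Longrightarrow> prob {\<omega> \<in> space M. X i \<omega> \<le> y} = p"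
  shows "prob {\<omega> \<in> space M. \<forall>i\<in>I. X i \<omega> \<le> y \<longleftrightarrow> i \<in> B} = p ^ card B * (1 - p) ^ (card I - card B)"
proof (cases "I = {}")
  case True
  then show ?thesis using \<open>B \<subseteq> I\<close> by (simp add: prob_space)
next
  case False
  define C where "C i = {x. x \<le> y \<longleftrightarrow> i \<in> B}" for i
  have rv: "X i \<in> borel_measurable M" if "i \<in> I" for i
    using indep that unfolding indep_vars_def by blast
  have vimage_C: "X i -` C i \<inter> space M = {\<omega> \<in> space M. X i \<omega> \<le> y \<longleftrightarrow> i \<in> B}" for i
    by (auto simp: C_def)
  have prob_C: "prob (X i -` C i \<inter> space M) = (if i \<in> B then p else 1 - p)" if "i \<in> I" for i
  proof -
    have "{\<omega> \<in> space M. \<not> X i \<omega> \<le> y} = space M - {\<omega> \<in> space M. X i \<omega> \<le> y}"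
      by auto
    moreover have "{\<omega> \<in> space M. X i \<omega> \<le> y} \<in> events"
      using rv[OF that] by measurable
    ultimately show ?thesis
      using cdf[OF that] by (simp add: vimage_C prob_compl)
  qed
  have "{\<omega> \<in> space M. \<forall>i\<in>I. X i \<omega> \<le> y \<longleftrightarrow> i \<in> B} = (\<Inter>i\<in>I. X i -` C i \<inter> space M)"
    using False by (auto simp: vimage_C)
  also have "prob \<dots> = (\<Prod>i\<in>I. prob (X i -` C i \<inter> space M))"
    using False \<open>finite I\<close> by (intro indep_varsD_finite[OF indep]) (auto simp: C_def)
  also have "\<dots> = (\<Prod>i\<in>I. if i \<in> B then p else 1 - p)"
    by (intro prod.cong) (auto simp: prob_C)
  finally show ?thesis
    using prod_if_mem[OF \<open>finite I\<close> \<open>B \<subseteq> I\<close>] by simp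
qed

definition Y_t2_tail :: "nat \<Rightarrow> nat \<Rightarrow> real \<Rightarrow> real" where
  "Y_t2_tail n k p = (\<Sum>j<k. real ((n - 1) choose j) * p ^ j * (1 - p) ^ (n - j))"

lemma (in prob_space) prob_less_Y_t2:
  fixes X :: "nat \<Rightarrow> 'a \<Rightarrow> real"
  assumes indep: "indep_vars (\<lambda>_. borel) X {1..n}"
    and t: "t \<in> {1..n}" and k: "1 \<le> k" "k \<le> n - 1"
    and cdf: "\<And>i. i \<in> {1..n} \<Longrightarrow> prob {\<omega> \<in> space M. X i \<omega> \<le> y} = p"
  shows "{\<omega> \<in> space M. y < Y_t2 n k t X \<omega>} \<in> events"
    and "prob {\<omega> \<in> space M. y < Y_t2 n k t X \<omega>} = Y_t2_tail n k p"
proof -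
  define S where "S = {1..n} - {t}"
  define E where "E B = {\<omega> \<in> space M. \<forall>i\<in>{1..n}. X i \<omega> \<le> y \<longleftrightarrow> i \<in> B}" for B
  define \<B> where "\<B> = {B. B \<subseteq> S \<and> card B < k}"
  have "finite S" and card_S: "card S = n - 1"
    using t by (auto simp: S_def)
  then have "finite \<B>"
    unfolding \<B>_def by (auto intro: rev_finite_subset[of "Pow S"])
  have E_events: "E B \<in> events" for B
  proof -
    have "X i \<in> borel_measurable M" if "i \<in> {1..n}" for i
      using indep that unfolding indep_vars_def by blast
    then show ?thesis
      unfolding E_def by (intro sets.sets_Collect_finite_All) auto
  qed
  have less_Y: "{\<omega> \<in> space M. y < Y_t2 n k t X \<omega>} = (\<Union>B\<in>\<B>. E B)"
  proof (intro set_eqI iffI)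
    fix \<omega> assume "\<omega> \<in> {\<omega> \<in> space M. y < Y_t2 n k t X \<omega>}"
    then have "\<omega> \<in> space M" "y < X t \<omega>" "card {i \<in> S. X i \<omega> \<le> y} < k"
      using less_Y_t2_iff[OF t k, of y X \<omega>, folded S_def] by simp_all
    then have "\<omega> \<in> E {i \<in> S. X i \<omega> \<le> y}" and "{i \<in> S. X i \<omega> \<le> y} \<in> \<B>"
      by (auto simp: E_def \<B>_def S_def)
    then show "\<omega> \<in> (\<Union>B\<in>\<B>. E B)"
      by blast
  next
    fix \<omega> assume "\<omega> \<in> (\<Union>B\<in>\<B>. E B)"
    then obtain B where "B \<subseteq> S" "card B < k" "\<omega> \<in> E B"
      by (auto simp: \<B>_def)
    then have "\<omega> \<in> space M" and iff: "\<forall>i\<in>{1..n}. X i \<omega> \<le> y \<longleftrightarrow> i \<in> B"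
      by (simp_all add: E_def)
    moreover have "y < X t \<omega>"
      using iff t \<open>B \<subseteq> S\<close> by (force simp: S_def)
    moreover have "{i \<in> S. X i \<omega> \<le> y} = B"
      using iff \<open>B \<subseteq> S\<close> by (auto simp: S_def)
    ultimately show "\<omega> \<in> {\<omega> \<in> space M. y < Y_t2 n k t X \<omega>}"
      using less_Y_t2_iff[OF t k, of y X \<omega>, folded S_def] \<open>card B < k\<close> by simp
  qed
  then show "{\<omega> \<in> space M. y < Y_t2 n k t X \<omega>} \<in> events"
    using \<open>finite \<B>\<close> E_events by auto
  have "disjoint_family_on E \<B>"
    unfolding disjoint_family_on_def \<B>_def S_def E_def by auto
  then have "prob (\<Union>B\<in>\<B>. E B) = (\<Sum>B\<in>\<B>. prob (E B))"
    using \<open>finite \<B>\<close> E_events by (intro finite_measure_finite_Union) auto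
  also have "\<dots> = (\<Sum>B\<in>\<B>. p ^ card B * (1 - p) ^ (n - card B))"
  proof (intro sum.cong refl)
    fix B assume "B \<in> \<B>"
    then have "B \<subseteq> {1..n}"
      by (auto simp: \<B>_def S_def)
    then show "prob (E B) = p ^ card B * (1 - p) ^ (n - card B)"
      using prob_indep_le_iff_mem[OF indep finite_atLeastAtMost _ cdf] by (simp add: E_def)
  qed
  also have "\<dots> = Y_t2_tail n k p"
    using sum_subsets_card_less[OF \<open>finite S\<close>, of "\<lambda>j. p ^ j * (1 - p) ^ (n - j)" k]
    unfolding \<B>_def Y_t2_tail_def card_S by (simp add: mult.assoc)
  finally show "prob {\<omega> \<in> space M. y < Y_t2 n k t X \<omega>} = Y_t2_tail n k p"
    unfolding less_Y .
qed

lemma nn_integral_layer_cake: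
  fixes f :: "'a \<Rightarrow> real"
  assumes "sigma_finite_measure M" and f: "f \<in> borel_measurable M"
  shows "(\<integral>\<^sup>+x. ennreal (f x) \<partial>M)
    = (\<integral>\<^sup>+y. emeasure M {x \<in> space M. y < f x} * indicator {0..} y \<partial>lborel)"
proof -
  interpret pair_sigma_finite M lborel
    using assms(1) by (simp add: pair_sigma_finite_def lborel.sigma_finite_measure_axioms)
  have "ennreal a = (\<integral>\<^sup>+y. indicator {0..<a} y \<partial>lborel)" for a :: real
    by (cases "0 \<le> a") (simp_all add: ennreal_neg)
  then have "(\<integral>\<^sup>+x. ennreal (f x) \<partial>M) = (\<integral>\<^sup>+x. \<integral>\<^sup>+y. indicator {0..<f x} y \<partial>lborel \<partial>M)"
    by simp
  also have "\<dots> = (\<integral>\<^sup>+y. \<integral>\<^sup>+x. indicator {0..<f x} y \<partial>M \<partial>lborel)"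
  proof (rule Fubini'[symmetric])
    have "(\<lambda>(x, y). indicator {0..<f x} y :: ennreal)
        = (\<lambda>(x, y). if 0 \<le> y \<and> y < f x then 1 else 0)"
      by (auto simp: indicator_def)
    then show "(\<lambda>(x, y). indicator {0..<f x} y :: ennreal) \<in> borel_measurable (M \<Otimes>\<^sub>M lborel)"
      using f by simp
  qed
  also have "\<dots> = (\<integral>\<^sup>+y. emeasure M {x \<in> space M. y < f x} * indicator {0..} y \<partial>lborel)"
  proof (intro nn_integral_cong)
    fix y :: real
    have "{x \<in> space M. y < f x} \<in> sets M"
      using f by measurable
    then have "(\<integral>\<^sup>+x. indicator {0..} y * indicator {x \<in> space M. y < f x} x \<partial>M)
        = indicator {0..} y * emeasure M {x \<in> space M. y < f x}"
      by (rule nn_integral_cmult_indicator)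
    moreover have "(\<integral>\<^sup>+x. indicator {0..<f x} y \<partial>M)
        = (\<integral>\<^sup>+x. indicator {0..} y * indicator {x \<in> space M. y < f x} x \<partial>M)"
      by (intro nn_integral_cong) (auto simp: indicator_def)
    ultimately show "(\<integral>\<^sup>+x. indicator {0..<f x} y \<partial>M)
        = emeasure M {x \<in> space M. y < f x} * indicator {0..} y"
      by (simp add: mult.commute)
  qed
  finally show ?thesis .
qed

lemma (in prob_space) AE_nonneg_if_prob_greater_negative:
  fixes f :: "'a \<Rightarrow> real"
  assumes "\<And>y. y < 0 \<Longrightarrow> prob {x \<in> space M. y < f x} = 1"
  shows "AE x in M. 0 \<le> f x"
proof -
  have "AE x in M. - inverse (real (Suc m)) < f x" for m
    using AE_prob_1[OF assms, of "- inverse (real (Suc m))"] by simp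
  then have "AE x in M. \<forall>m. - inverse (real (Suc m)) < f x"
    by (simp add: AE_all_countable)
  moreover have "0 \<le> z" if "\<forall>m. - inverse (real (Suc m)) < z" for z :: real
  proof (rule ccontr)
    assume "\<not> 0 \<le> z"
    then obtain m where "inverse (real (Suc m)) < - z"
      using reals_Archimedean by (metis neg_0_less_iff_less not_le)
    then show False
      using that by (metis add.inverse_inverse neg_less_iff_less order_less_asym)
  qed
  ultimately show ?thesis
    by (auto elim: AE_mp)
qed

definition binomial_cdf :: "nat \<Rightarrow> nat \<Rightarrow> real \<Rightarrow> real" where
  "binomial_cdf n m p = (\<Sum>j\<le>m. real (n choose j) * p ^ j * (1 - p) ^ (n - j))"

lemma binomial_cdf_0 [simp]: "binomial_cdf n m 0 = 1"
  by (induction m) (simp_all add: binomial_cdf_def)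

lemma binomial_cdf_1 [simp]: "m < n \<Longrightarrow> binomial_cdf n m 1 = 0"
  unfolding binomial_cdf_def by (intro sum.neutral) auto

lemma binomial_cdf_has_real_derivative:
  assumes "m < n"
  shows "(binomial_cdf n m has_real_derivative
      - (real n * real ((n - 1) choose m) * p ^ m * (1 - p) ^ (n - 1 - m))) (at p)"
  using assms
proof (induction m)
  case 0
  have "((\<lambda>p. (1 - p) ^ n) has_real_derivative - (real n * (1 - p) ^ (n - 1))) (at p)"
    by (rule derivative_eq_intros refl | simp)+
  then show ?case
    by (simp add: binomial_cdf_def)
next
  case (Suc m)
  then obtain q where q: "n - Suc m = Suc q"
    by (metis Suc_diff_Suc)
  define c where "c = real (n choose Suc m)"
  have "n - 1 - m = Suc q" and "n - 1 - Suc m = q"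
    using q by simp_all
  have IH: "(binomial_cdf n m has_real_derivative
      - (real n * real ((n - 1) choose m) * (p ^ m * (1 - p) ^ Suc q))) (at p)"
    using Suc \<open>n - 1 - m = Suc q\<close> by (simp add: mult.assoc)
  have "((\<lambda>p. c * p ^ Suc m * (1 - p) ^ Suc q) has_real_derivative
      (real (Suc m) * c) * (p ^ m * (1 - p) ^ Suc q) - (real (Suc q) * c) * (p ^ Suc m * (1 - p) ^ q))
      (at p)"
    by (rule derivative_eq_intros refl | simp)+
  moreover have "real (Suc m) * c = real n * real ((n - 1) choose m)"
    unfolding c_def by (metis binomial_absorption of_nat_mult)
  moreover have "real (Suc q) * c = real n * real ((n - 1) choose Suc m)"
    unfolding c_def by (metis binomial_absorb_comp q of_nat_mult)
  ultimately have "((\<lambda>p. binomial_cdf n m p + c * p ^ Suc m * (1 - p) ^ Suc q) has_real_derivative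
      - (real n * real ((n - 1) choose Suc m) * (p ^ Suc m * (1 - p) ^ q))) (at p)"
    using DERIV_add[OF IH] by fastforce
  moreover have "binomial_cdf n (Suc m) = (\<lambda>p. binomial_cdf n m p + c * p ^ Suc m * (1 - p) ^ Suc q)"
    by (simp add: fun_eq_iff binomial_cdf_def c_def q)
  ultimately show ?case
    using \<open>n - 1 - Suc m = q\<close> by (simp add: mult.assoc)
qed

lemma Y_t2_tail_0 [simp]: "1 \<le> k \<Longrightarrow> Y_t2_tail n k 0 = 1"
  by (induction k rule: dec_induct) (simp_all add: Y_t2_tail_def)

lemma Y_t2_tail_nonneg: "0 \<le> p \<Longrightarrow> p \<le> 1 \<Longrightarrow> 0 \<le> Y_t2_tail n k p"
  unfolding Y_t2_tail_def by (intro sum_nonneg) auto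

lemma nn_integral_Y_t2_tail_exp:
  fixes l s :: real
  assumes "l > 0" and "k < n"
  shows "(\<integral>\<^sup>+y. ennreal (Y_t2_tail n k (1 - exp (- l * (y - s)))) * indicator {s..} y \<partial>lborel)
    = ennreal (real k / (l * real n))"
proof -
  define p where "p y = 1 - exp (- l * (y - s))" for y
  define G where "G y = - (\<Sum>m<k. binomial_cdf n m (p y)) / (l * real n)" for y
  have "(G has_real_derivative Y_t2_tail n k (p y)) (at y)" for y
  proof -
    have p': "(p has_real_derivative l * (1 - p y)) (at y)"
      unfolding p_def by (rule derivative_eq_intros refl | simp)+
    have "((\<lambda>y. binomial_cdf n m (p y)) has_real_derivative
        - (l * real n) * (real ((n - 1) choose m) * p y ^ m * (1 - p y) ^ (n - m))) (at y)"
      if "m < k" for m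
    proof -
      have "n - m = Suc (n - 1 - m)"
        using that \<open>k < n\<close> by simp
      then show ?thesis
        using DERIV_chain2[OF binomial_cdf_has_real_derivative p', of m n] that \<open>k < n\<close>
        by (simp add: algebra_simps)
    qed
    then have "((\<lambda>y. \<Sum>m<k. binomial_cdf n m (p y)) has_real_derivative
        - (l * real n) * Y_t2_tail n k (p y)) (at y)"
      unfolding Y_t2_tail_def sum_distrib_left by (intro DERIV_sum) auto
    then have "(G has_real_derivative - (- (l * real n) * Y_t2_tail n k (p y)) / (l * real n)) (at y)"
      unfolding G_def by (rule DERIV_cdivide[OF DERIV_minus])
    then show ?thesis
      using \<open>l > 0\<close> \<open>k < n\<close> by simp
  qed
  moreover have "(G \<longlongrightarrow> 0) at_top"
  proof -
    have "(p \<longlongrightarrow> 1) at_top"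
      unfolding p_def using \<open>l > 0\<close> by real_asymp
    then have "(G \<longlongrightarrow> - (\<Sum>m<k. binomial_cdf n m 1) / (l * real n)) at_top"
      unfolding G_def binomial_cdf_def using \<open>l > 0\<close> \<open>k < n\<close> by (intro tendsto_intros) auto
    then show ?thesis
      using \<open>k < n\<close> by simp
  qed
  moreover have "0 \<le> Y_t2_tail n k (p y)" if "s \<le> y" for y
    using that \<open>l > 0\<close> by (intro Y_t2_tail_nonneg) (auto simp: p_def)
  ultimately have "(\<integral>\<^sup>+y. ennreal (Y_t2_tail n k (p y)) * indicator {s..} y \<partial>lborel) = ennreal (0 - G s)"
    by (intro nn_integral_FTC_atLeast) (auto simp: p_def Y_t2_tail_def)
  then show ?thesis
    by (simp add: p_def G_def)
qed

lemma nn_integral_Y_t2_tail_shifted_exp_cdf: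
  assumes "l > 0" and "s \<ge> 0" and "1 \<le> k" and "k < n"
  shows "(\<integral>\<^sup>+y. ennreal (Y_t2_tail n k (shifted_exp_cdf l s y)) * indicator {0..} y \<partial>lborel)
    = ennreal (s + real k / (l * real n))"
proof -
  have "(\<integral>\<^sup>+y. ennreal (Y_t2_tail n k (shifted_exp_cdf l s y)) * indicator {0..} y \<partial>lborel)
      = (\<integral>\<^sup>+y. indicator {0..<s} y
          + ennreal (Y_t2_tail n k (1 - exp (- l * (y - s)))) * indicator {s..} y \<partial>lborel)"
    using assms by (intro nn_integral_cong) (auto simp: shifted_exp_cdf_def indicator_def)
  also have "\<dots> = emeasure lborel {0..<s}
      + (\<integral>\<^sup>+y. ennreal (Y_t2_tail n k (1 - exp (- l * (y - s)))) * indicator {s..} y \<partial>lborel)"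
    by (subst nn_integral_add) (auto simp: Y_t2_tail_def)
  also have "\<dots> = ennreal (s + real k / (l * real n))"
    using assms nn_integral_Y_t2_tail_exp[of l k n s] by (simp add: ennreal_plus)
  finally show ?thesis .
qed

theorem corollary6:
  fixes M :: "'a measure" and X :: "nat \<Rightarrow> 'a \<Rightarrow> real"
    and n k t :: nat and l s :: real
  assumes "prob_space M"
    and "n \<ge> 2" and "1 \<le> k" and "k \<le> n - 1"
    and "l > 0" and "s \<ge> 0"
    and "t \<in> {1..n}"
    and "prob_space.indep_vars M (\<lambda>_. borel) X {1..n}"
    and "\<And>i y. i \<in> {1..n} \<Longrightarrow>
           measure M {\<omega> \<in> space M. X i \<omega> \<le> y} = shifted_exp_cdf l s y"
  shows "prob_space.expectation M (Y_t2 n k t X) = s + real k / (l * real n)"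
proof -
  interpret prob_space M by fact
  define Y where "Y = Y_t2 n k t X"
  have survival: "{\<omega> \<in> space M. y < Y \<omega>} \<in> events"
    "prob {\<omega> \<in> space M. y < Y \<omega>} = Y_t2_tail n k (shifted_exp_cdf l s y)" for y
    unfolding Y_def using prob_less_Y_t2[OF assms(8,7,3,4) assms(9)] by auto
  then have "Y \<in> borel_measurable M"
    by (auto simp: borel_measurable_iff_greater)
  moreover have "AE \<omega> in M. 0 \<le> Y \<omega>"
    using survival(2) assms(3,6) by (intro AE_nonneg_if_prob_greater_negative) (simp add: shifted_exp_cdf_def)
  ultimately have "expectation Y = enn2real (\<integral>\<^sup>+\<omega>. ennreal (Y \<omega>) \<partial>M)"
    by (rule integral_eq_nn_integral)
  also have "(\<integral>\<^sup>+\<omega>. ennreal (Y \<omega>) \<partial>M)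
      = (\<integral>\<^sup>+y. emeasure M {\<omega> \<in> space M. y < Y \<omega>} * indicator {0..} y \<partial>lborel)"
    using \<open>Y \<in> borel_measurable M\<close> by (intro nn_integral_layer_cake) unfold_locales
  also have "\<dots> = (\<integral>\<^sup>+y. ennreal (Y_t2_tail n k (shifted_exp_cdf l s y)) * indicator {0..} y \<partial>lborel)"
    by (simp add: emeasure_eq_measure survival(2))
  also have "\<dots> = ennreal (s + real k / (l * real n))"
    using assms(2-6) by (intro nn_integral_Y_t2_tail_shifted_exp_cdf) auto
  finally show ?thesis
    using assms(5,6) unfolding Y_def by (simp add: enn2real_plus)
qed

end
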